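(* Let $S$ be an infinite set and $\mathcal{F}\subseteq 2^S$ countable, nontrivial, and closed under finite unions and finite intersections. Let $\mathbf{A}=(A_1,\dots,A_k)$ be a classification problem with $k\ge 2$, and let $C\subseteq S\setminus(A_1\cup\dots\cup A_k)$ be $\mathcal{F}$-cohesive with $(C,A_i)\notin\mathit{class}_2(\mathcal{F})$ for $1\le i\le k$. Then there exists $\mathbf{B}\le\mathbf{A}$ with $|\mathbf{B}|=k$ and $\mathbf{B}\in\mathit{core}_k(\mathcal{F})$.
   Context: $\mathcal{F}$ is nontrivial if $\emptyset,S\in\mathcal{F}$ and for all $Q\in\mathcal{F}$ and finite $E\subseteq S$ both $Q\cup E\in\mathcal{F}$ and $Q\setminus E\in\mathcal{F}$. A classification problem is a vector $(A_1,\dots,A_k)$, $k\ge1$, of pairwise disjoint infinite subsets of $S$, of length $k$. For vectors $\mathbf{B}=(B_1,\dots,B_m)$, $\mathbf{Q}=(Q_1,\dots,Q_k)$, $\mathbf{B}\le\mathbf{Q}$ means $1\le m\le k$ and there is an injective $\sigma:\{1,\dots,m\}\to\{1,\dots,k\}$ with $B_i\subseteq Q_{\sigma(i)}$. An $\mathcal{F}$-partition is a vector of pairwise disjoint members of $\mathcal{F}$ whose union is $S$. $\mathit{class}_k(\mathcal{F})$: classification problems of length $k$ with $\mathbf{A}\le\mathbf{Q}$ for some $\mathcal{F}$-partition $\mathbf{Q}$ of length $k$ (for $k=2$, $(C,A_i)\in\mathit{class}_2(\mathcal{F})$ requires in particular $C$ infinite). For $k>1$, $\mathit{core}_k(\mathcal{F})$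 is the set of classification problems $\mathbf{A}$ of length $k$ (in particular with infinite, pairwise disjoint components) such that every classification problem $\mathbf{A}'\le\mathbf{A}$ with $|\mathbf{A}'|>1$ satisfies $\mathbf{A}'\notin\mathit{class}_{|\mathbf{A}'|}(\mathcal{F})$. A set $A\subseteq S$ is $\mathcal{F}$-cohesive if $A$ is infinite and for every $Q$ with $Q\in\mathcal{F}$ and $S\setminus Q\in\mathcal{F}$, either $A\cap Q$ or $A\setminus Q$ is finite. *)

theory Defs
  imports Main "HOL-Library.Countable_Set"
begin

text \<open>Vectors of sets (A_1,...,A_k) are represented as lists; index i (1-based in the
paper) corresponds to list position i-1.\<close>

definition nontrivial :: "'a set \<Rightarrow> 'a set set \<Rightarrow> bool" where
  "nontrivial S F \<longleftrightarrow> {} \<in> F \<and> S \<in> F \<and>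
     (\<forall>Q\<in>F. \<forall>E. finite E \<and> E \<subseteq> S \<longrightarrow> Q \<union> E \<in> F \<and> Q - E \<in> F)"

definition closed_un_int :: "'a set set \<Rightarrow> bool" where
  "closed_un_int F \<longleftrightarrow> (\<forall>P\<in>F. \<forall>Q\<in>F. P \<union> Q \<in> F \<and> P \<inter> Q \<in> F)"

definition classification_problem :: "'a set \<Rightarrow> 'a set list \<Rightarrow> bool" where
  "classification_problem S A \<longleftrightarrow> length A \<ge> 1 \<and>
     (\<forall>i<length A. A ! i \<subseteq> S \<and> infinite (A ! i)) \<and>
     (\<forall>i<length A. \<forall>j<length A. i \<noteq> j \<longrightarrow> A ! i \<inter> A ! j = {})"

definition vec_le :: "'a set list \<Rightarrow> 'a set list \<Rightarrow> bool" where
  "vec_le B Q \<longleftrightarrow> 1 \<le> length B \<and> length B \<le> length Q \<and>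
     (\<exists>\<sigma>. inj_on \<sigma> {..<length B} \<and> \<sigma> ` {..<length B} \<subseteq> {..<length Q} \<and>
          (\<forall>i<length B. B ! i \<subseteq> Q ! (\<sigma> i)))"

definition F_partition :: "'a set \<Rightarrow> 'a set set \<Rightarrow> 'a set list \<Rightarrow> bool" where
  "F_partition S F Q \<longleftrightarrow> (\<forall>i<length Q. Q ! i \<in> F) \<and>
     (\<forall>i<length Q. \<forall>j<length Q. i \<noteq> j \<longrightarrow> Q ! i \<inter> Q ! j = {}) \<and>
     \<Union>(set Q) = S"

definition class_k :: "'a set \<Rightarrow> 'a set set \<Rightarrow> nat \<Rightarrow> 'a set list \<Rightarrow> bool" where
  "class_k S F k A \<longleftrightarrow> classification_problem S A \<and> length A = k \<and>
     (\<exists>Q. F_partition S F Q \<and> length Q = k \<and> vec_le A Q)"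

definition core_k :: "'a set \<Rightarrow> 'a set set \<Rightarrow> nat \<Rightarrow> 'a set list \<Rightarrow> bool" where
  "core_k S F k A \<longleftrightarrow> k > 1 \<and> classification_problem S A \<and> length A = k \<and>
     (\<forall>A'. classification_problem S A' \<and> vec_le A' A \<and> length A' > 1 \<longrightarrow>
           \<not> class_k S F (length A') A')"

definition F_cohesive :: "'a set \<Rightarrow> 'a set set \<Rightarrow> 'a set \<Rightarrow> bool" where
  "F_cohesive S F A \<longleftrightarrow> infinite A \<and>
     (\<forall>Q. Q \<in> F \<and> S - Q \<in> F \<longrightarrow> finite (A \<inter> Q) \<or> finite (A - Q))"

end

theory Submission
  imports Defs
begin

text \<open>Let \<open>U\<close> be the countable family of \<open>\<F>\<close>-clopen sets almost containing \<open>C\<close>; it is closed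
under finite intersections. Each \<open>A\<^sub>i\<close> meets every member of \<open>U\<close> in an infinite set, since
otherwise a finite modification of that member would separate \<open>C\<close> from \<open>A\<^sub>i\<close>. A diagonal
argument along a decreasing cofinal sequence in \<open>U\<close> yields infinite \<open>B\<^sub>i \<subseteq> A\<^sub>i\<close> almost contained
in every member of \<open>U\<close>. By cohesiveness of \<open>C\<close>, every clopen \<open>R\<close> or its complement lies in \<open>U\<close>,
so no clopen set splits the \<open>B\<^sub>i\<close>; but classifying any two infinite subsets of the \<open>B\<^sub>i\<close> would
require such a split.\<close>

definition F_clopen :: "'a set \<Rightarrow> 'a set set \<Rightarrow> 'a set \<Rightarrow> bool" where
  "F_clopen S F Q \<longleftrightarrow> Q \<in> F \<and> S - Q \<in> F"

definition clopens_almost_containing :: "'a set \<Rightarrow> 'a set set \<Rightarrow> 'a set \<Rightarrow> 'a set set" where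
  "clopens_almost_containing S F C = {Q. F_clopen S F Q \<and> finite (C - Q)}"

definition unsplit_by_clopens :: "'a set \<Rightarrow> 'a set set \<Rightarrow> 'a set list \<Rightarrow> bool" where
  "unsplit_by_clopens S F Bs \<longleftrightarrow> (\<forall>R. F_clopen S F R \<longrightarrow>
     (\<forall>B\<in>set Bs. finite (B - R)) \<or> (\<forall>B\<in>set Bs. finite (B - (S - R))))"

primrec distinct_choices :: "(nat \<Rightarrow> 'a set) \<Rightarrow> nat \<Rightarrow> 'a list" where
  "distinct_choices X 0 = []"
| "distinct_choices X (Suc n) =
     (SOME x. x \<in> X n \<and> x \<notin> set (distinct_choices X n)) # distinct_choices X n"

lemma pseudo_intersection_decreasing:
  assumes inf: "\<And>n. infinite (X n)" and dec: "\<And>n. X (Suc n) \<subseteq> X n"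
  shows "\<exists>B. infinite B \<and> B \<subseteq> X 0 \<and> (\<forall>n. finite (B - X n))"
proof -
  define sel where "sel n = (SOME x. x \<in> X n \<and> x \<notin> set (distinct_choices X n))" for n
  have earlier: "set (distinct_choices X n) = sel ` {..<n}" for n
    by (induction n) (auto simp: sel_def lessThan_Suc)
  have sel: "sel n \<in> X n \<and> sel n \<notin> sel ` {..<n}" for n
  proof -
    have "\<exists>x. x \<in> X n \<and> x \<notin> set (distinct_choices X n)"
      using inf[of n] by (metis List.finite_set finite_subset subsetI)
    then show ?thesis unfolding sel_def earlier[symmetric] by (rule someI_ex)
  qed
  have mono: "m \<le> n \<Longrightarrow> X n \<subseteq> X m" for m n
    using dec by (rule lift_Suc_antimono_le)
  have "inj sel"
  proof (rule injI)
    fix a b assume "sel a = sel b"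
    then show "a = b"
      using sel[of a] sel[of b] by (metis lessThan_iff imageI linorder_neqE_nat)
  qed
  then have "infinite (range sel)"
    using finite_imageD by blast
  moreover have "range sel \<subseteq> X 0"
    using sel mono[of 0] by auto
  moreover have "finite (range sel - X n)" for n
  proof (rule finite_subset)
    show "range sel - X n \<subseteq> sel ` {..<n}"
    proof clarify
      fix j assume "sel j \<notin> X n"
      then have "j < n"
        using sel[of j] mono[of n j] by (meson not_less subsetD)
      then show "sel j \<in> sel ` {..<n}" by simp
    qed
  qed simp
  ultimately show ?thesis by blast
qed

lemma countable_Int_closed_decreasing_cofinal:
  assumes "countable U" "U \<noteq> {}" and Int: "\<And>P Q. P \<in> U \<Longrightarrow> Q \<in> U \<Longrightarrow> P \<inter> Q \<in> U"
  shows "\<exists>P. range P \<subseteq> U \<and> (\<forall>n. P (Suc n) \<subseteq> P n) \<and> (\<forall>Q\<in>U. \<exists>n. P n \<subseteq> Q)"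
proof -
  define f where "f = from_nat_into U"
  have range_f: "range f = U"
    unfolding f_def using assms(2,1) by (rule range_from_nat_into)
  define P where "P n = (\<Inter>j\<le>n. f j)" for n
  have P_Suc: "P (Suc n) = P n \<inter> f (Suc n)" for n
    unfolding P_def by (auto simp: atMost_Suc)
  have f: "f n \<in> U" for n
    using range_f by blast
  have "P n \<in> U" for n
  proof (induction n)
    case 0
    then show ?case using f by (simp add: P_def)
  next
    case (Suc n)
    then show ?case using f Int by (simp add: P_Suc)
  qed
  moreover have "P (Suc n) \<subseteq> P n" for n
    by (auto simp: P_Suc)
  moreover have "\<exists>n. P n \<subseteq> Q" if "Q \<in> U" for Q
    using that range_f by (force simp: P_def)
  ultimately show ?thesis by blast
qed

lemma pseudo_intersection_countable_Int_closed:
  assumes "countable U" "U \<noteq> {}" "\<And>P Q. P \<in> U \<Longrightarrow> Q \<in> U \<Longrightarrow> P \<inter> Q \<in> U"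
    and meets: "\<And>Q. Q \<in> U \<Longrightarrow> infinite (A \<inter> Q)"
  shows "\<exists>B. infinite B \<and> B \<subseteq> A \<and> (\<forall>Q\<in>U. finite (B - Q))"
proof -
  obtain P where P: "range P \<subseteq> U" "\<And>n. P (Suc n) \<subseteq> P n" and cofinal: "\<forall>Q\<in>U. \<exists>n. P n \<subseteq> Q"
    using countable_Int_closed_decreasing_cofinal[OF assms(1-3)] by blast
  have "infinite (A \<inter> P n)" for n
    using meets P(1) by blast
  moreover have "A \<inter> P (Suc n) \<subseteq> A \<inter> P n" for n
    using P(2) by blast
  ultimately have "\<exists>B. infinite B \<and> B \<subseteq> A \<inter> P 0 \<and> (\<forall>n. finite (B - A \<inter> P n))"
    by (rule pseudo_intersection_decreasing)
  then obtain B where B: "infinite B" "B \<subseteq> A \<inter> P 0" "\<forall>n. finite (B - A \<inter> P n)"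
    by blast
  have "finite (B - Q)" if Q: "Q \<in> U" for Q
  proof -
    obtain n where "P n \<subseteq> Q" using cofinal Q by blast
    then have "B - Q \<subseteq> B - A \<inter> P n" using B(2) by blast
    then show ?thesis
      by (rule finite_subset) (use B(3) in blast)
  qed
  with B show ?thesis by blast
qed

lemma closed_un_int_Union:
  assumes "closed_un_int F" "{} \<in> F" "finite X" "X \<subseteq> F"
  shows "\<Union>X \<in> F"
  using assms(3,4)
  by (induction X rule: finite_induct) (use assms(1,2) in \<open>auto simp: closed_un_int_def\<close>)

lemma F_clopen_finite_change:
  assumes "nontrivial S F" "F_clopen S F Q" "finite E" "E \<subseteq> S"
  shows "F_clopen S F (Q \<union> E)" "F_clopen S F (Q - E)"
proof -
  have "S - (Q \<union> E) = (S - Q) - E" "S - (Q - E) = (S - Q) \<union> E"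
    using assms(4) by auto
  then show "F_clopen S F (Q \<union> E)" "F_clopen S F (Q - E)"
    using assms unfolding nontrivial_def F_clopen_def by metis+
qed

lemma F_partition_component_clopen:
  assumes "F_partition S F Q" "closed_un_int F" "{} \<in> F" "i < length Q"
  shows "F_clopen S F (Q ! i)"
proof -
  note part = assms(1)[unfolded F_partition_def]
  have "S - Q ! i = \<Union>((!) Q ` ({..<length Q} - {i}))"
    using part assms(4) by (fastforce simp: in_set_conv_nth)
  moreover have "\<Union>((!) Q ` ({..<length Q} - {i})) \<in> F"
    using part by (intro closed_un_int_Union[OF assms(2,3)]) auto
  ultimately show ?thesis
    using part assms(4) by (simp add: F_clopen_def)
qed

lemma class_k_separating_clopen:
  assumes "class_k S F m A" "1 < m" "closed_un_int F" "{} \<in> F"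
  shows "\<exists>R. F_clopen S F R \<and> A ! 0 \<subseteq> R \<and> A ! 1 \<subseteq> S - R"
proof -
  obtain Q \<rho> where part: "F_partition S F Q" "length Q = m" "length A = m"
    and \<rho>: "inj_on \<rho> {..<m}" "\<rho> ` {..<m} \<subseteq> {..<m}" "\<forall>i<m. A ! i \<subseteq> Q ! \<rho> i"
    using assms(1) unfolding class_k_def vec_le_def by auto
  have "\<rho> 0 \<noteq> \<rho> 1"
    using \<rho>(1) assms(2) unfolding inj_on_def by force
  moreover have bounds: "\<rho> 0 < length Q" "\<rho> 1 < length Q"
    using \<rho>(2) assms(2) part(2) by (auto simp: image_subset_iff)
  ultimately have "Q ! \<rho> 1 \<inter> Q ! \<rho> 0 = {}" "Q ! \<rho> 1 \<subseteq> S"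
    using part(1) unfolding F_partition_def by (blast, auto)
  then have "F_clopen S F (Q ! \<rho> 0)" "Q ! \<rho> 1 \<subseteq> S - Q ! \<rho> 0"
    using F_partition_component_clopen[OF part(1) assms(3,4) bounds(1)] by blast+
  then show ?thesis
    using \<rho>(3) assms(2) by (metis order.trans less_trans zero_less_one)
qed

lemma class_2_if_separated:
  assumes "F \<subseteq> Pow S" "F_clopen S F R" "classification_problem S [X, Y]"
    "X \<subseteq> R" "Y \<inter> R = {}"
  shows "class_k S F 2 [X, Y]"
  unfolding class_k_def
proof (intro conjI exI)
  show "F_partition S F [R, S - R]"
    using assms(1,2) unfolding F_partition_def F_clopen_def by (auto simp: less_Suc_eq)
  show "vec_le [X, Y] [R, S - R]"
    unfolding vec_le_def
    by (rule conjI, simp, rule conjI, simp, rule exI[of _ id])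
      (use assms(3-5) in \<open>auto simp: less_Suc_eq classification_problem_def\<close>)
qed (use assms(3) in auto)

lemma infinite_Int_clopens_almost_containing:
  assumes "nontrivial S F" "F \<subseteq> Pow S" "classification_problem S [C, A]"
    "\<not> class_k S F 2 [C, A]" "Q \<in> clopens_almost_containing S F C"
  shows "infinite (A \<inter> Q)"
proof
  assume "finite (A \<inter> Q)"
  have sub: "C \<subseteq> S" "A \<subseteq> S" and disj: "C \<inter> A = {}"
    using assms(3) unfolding classification_problem_def by (force simp: less_Suc_eq)+
  define R where "R = (Q \<union> (C - Q)) - (A \<inter> Q)"
  have "F_clopen S F R"
    unfolding R_def using assms(1,5) \<open>finite (A \<inter> Q)\<close> sub
    by (intro F_clopen_finite_change)
      (auto intro: F_clopen_finite_change simp: clopens_almost_containing_def)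
  moreover have "C \<subseteq> R" "A \<inter> R = {}"
    using disj unfolding R_def by auto
  ultimately show False
    using class_2_if_separated[OF assms(2) _ assms(3)] assms(4) by blast
qed

lemma classification_problem_shrink:
  assumes "classification_problem S A" "length B = length A"
    "\<forall>i<length A. infinite (B ! i) \<and> B ! i \<subseteq> A ! i"
  shows "classification_problem S B" "vec_le B A"
proof -
  show "classification_problem S B"
    unfolding classification_problem_def
  proof (intro conjI allI impI)
    fix i j assume "i < length B" "j < length B" "i \<noteq> j"
    then have "A ! i \<inter> A ! j = {}" "B ! i \<subseteq> A ! i" "B ! j \<subseteq> A ! j"
      using assms unfolding classification_problem_def by auto
    then show "B ! i \<inter> B ! j = {}" by blast
  next
    fix i assume "i < length B"
    then show "B ! i \<subseteq> S" "infinite (B ! i)"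
      using assms unfolding classification_problem_def by auto
  qed (use assms in \<open>simp add: classification_problem_def\<close>)
  show "vec_le B A"
    unfolding vec_le_def
    by (rule conjI, use assms(1,2) in \<open>simp add: classification_problem_def\<close>,
        rule conjI, use assms(2) in simp, rule exI[of _ id]) (use assms(2,3) in auto)
qed

lemma core_k_if_unsplit_by_clopens:
  assumes "nontrivial S F" "closed_un_int F" "classification_problem S B" "1 < length B"
    and unsplit: "unsplit_by_clopens S F B"
  shows "core_k S F (length B) B"
  unfolding core_k_def
proof (intro conjI allI impI notI)
  fix A' assume A': "classification_problem S A' \<and> vec_le A' B \<and> 1 < length A'"
    and "class_k S F (length A') A'"
  moreover have "{} \<in> F"
    using assms(1) unfolding nontrivial_def by blast
  ultimately obtain R where R: "F_clopen S F R" "A' ! 0 \<subseteq> R" "A' ! 1 \<subseteq> S - R"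
    using class_k_separating_clopen[OF _ _ assms(2)] by blast
  obtain \<tau> where \<tau>: "\<tau> ` {..<length A'} \<subseteq> {..<length B}" "\<forall>i<length A'. A' ! i \<subseteq> B ! \<tau> i"
    using A' unfolding vec_le_def by blast
  have len: "0 < length A'" "1 < length A'"
    using A' by auto
  then have in_B: "B ! \<tau> 0 \<in> set B" "B ! \<tau> 1 \<in> set B"
    using \<tau>(1) by (auto simp: image_subset_iff)
  have "A' ! 0 \<subseteq> B ! \<tau> 0" "A' ! 1 \<subseteq> B ! \<tau> 1"
    using \<tau>(2) len by blast+
  then have "A' ! 0 \<subseteq> B ! \<tau> 0 - (S - R)" "A' ! 1 \<subseteq> B ! \<tau> 1 - R"
    using R by auto
  moreover have "infinite (A' ! 0)" "infinite (A' ! 1)"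
    using A' len unfolding classification_problem_def by auto
  ultimately show False
    using unsplit R(1) in_B unfolding unsplit_by_clopens_def by (meson finite_subset)
qed (use assms(3,4) in auto)

lemma clopens_almost_containing_countable_Int_closed:
  assumes "countable F" "nontrivial S F" "closed_un_int F" "C \<subseteq> S"
  shows "countable (clopens_almost_containing S F C)" "clopens_almost_containing S F C \<noteq> {}"
    "\<And>P Q. P \<in> clopens_almost_containing S F C \<Longrightarrow> Q \<in> clopens_almost_containing S F C
      \<Longrightarrow> P \<inter> Q \<in> clopens_almost_containing S F C"
proof -
  show "countable (clopens_almost_containing S F C)"
    using assms(1) by (rule countable_subset[rotated]) (auto simp: clopens_almost_containing_def F_clopen_def)
  have "finite (C - S)"
    using assms(4) by (metis Diff_eq_empty_iff finite.emptyI)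
  then have "S \<in> clopens_almost_containing S F C"
    using assms(2) by (simp add: clopens_almost_containing_def F_clopen_def nontrivial_def)
  then show "clopens_almost_containing S F C \<noteq> {}" by blast
next
  fix P Q assume "P \<in> clopens_almost_containing S F C" "Q \<in> clopens_almost_containing S F C"
  then show "P \<inter> Q \<in> clopens_almost_containing S F C"
    using assms(3)
    by (auto simp: clopens_almost_containing_def F_clopen_def closed_un_int_def Diff_Int)
qed

lemma F_cohesive_unsplit_by_clopens:
  assumes "F \<subseteq> Pow S" "F_cohesive S F C" "C \<subseteq> S"
    and almost_in: "\<forall>B\<in>set Bs. \<forall>Q\<in>clopens_almost_containing S F C. finite (B - Q)"
  shows "unsplit_by_clopens S F Bs"
  unfolding unsplit_by_clopens_def
proof (intro allI impI)
  fix R assume R: "F_clopen S F R"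
  have "S - (S - R) = R" "C - (S - R) = C \<inter> R"
    using R assms(1,3) by (auto simp: F_clopen_def)
  then have "R \<in> clopens_almost_containing S F C \<or> S - R \<in> clopens_almost_containing S F C"
    using R assms(2) unfolding clopens_almost_containing_def F_clopen_def F_cohesive_def by auto
  then show "(\<forall>B\<in>set Bs. finite (B - R)) \<or> (\<forall>B\<in>set Bs. finite (B - (S - R)))"
    using almost_in by blast
qed

theorem theorem3p8:
  fixes S :: "'a set" and F :: "'a set set" and A :: "'a set list" and C :: "'a set" and k :: nat
  assumes "infinite S"
    and "F \<subseteq> Pow S"
    and "countable F"
    and "nontrivial S F"
    and "closed_un_int F"
    and "classification_problem S A"
    and "length A = k"
    and "k \<ge> 2"
    and "C \<subseteq> S - \<Union>(set A)"
    and "F_cohesive S F C"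
    and "\<forall>i<k. \<not> class_k S F 2 [C, A ! i]"
  shows "\<exists>B. vec_le B A \<and> length B = k \<and> core_k S F k B"
proof -
  have "C \<subseteq> S"
    using assms(9) by blast
  let ?U = "clopens_almost_containing S F C"
  have "classification_problem S [C, A ! i]" if "i < k" for i
    using assms(6,7,9,10) that
    by (auto simp: classification_problem_def F_cohesive_def less_Suc_eq nth_Cons')
  then have A_meets_U: "infinite (A ! i \<inter> Q)" if "i < k" "Q \<in> ?U" for i Q
    using infinite_Int_clopens_almost_containing[OF assms(4,2)] assms(11) that by blast
  have "\<exists>Bi. infinite Bi \<and> Bi \<subseteq> A ! i \<and> (\<forall>Q\<in>?U. finite (Bi - Q))" if "i < k" for i
    using pseudo_intersection_countable_Int_closed
      [OF clopens_almost_containing_countable_Int_closed[OF assms(3,4,5) \<open>C \<subseteq> S\<close>]]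
      A_meets_U[OF that] by blast
  then obtain b where b: "\<And>i. i < k \<Longrightarrow> infinite (b i) \<and> b i \<subseteq> A ! i \<and> (\<forall>Q\<in>?U. finite (b i - Q))"
    by metis
  define B where "B = map b [0..<k]"
  have "classification_problem S B" "vec_le B A"
    using classification_problem_shrink[OF assms(6)] b assms(7) by (auto simp: B_def)
  moreover have "unsplit_by_clopens S F B"
    using F_cohesive_unsplit_by_clopens[OF assms(2,10) \<open>C \<subseteq> S\<close>] b by (auto simp: B_def)
  moreover have "length B = k"
    by (simp add: B_def)
  ultimately show ?thesis
    using core_k_if_unsplit_by_clopens[OF assms(4,5), of B] assms(8) by auto
qed

end
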